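(* For every $\varepsilon \in (0,1)$, $\ell, z \in \mathbb{N}$ and every time series $x\in \mathbb{R}^z$ there exists a time series $x' \in \mathbb{R}^{z'}$ with $z' \in O\big(2^{O(\ell/\epsilon)^{(2\ell+2)}}\big)$ such that for every $y\in \mathbb{R}^\ell$, \[ (1-\varepsilon)\, \mathbf{d}_{dF}(x,y) \le \mathbf{d}_{dF}(x',y) \le (1+\varepsilon)\, \mathbf{d}_{dF}(x,y). \]
   Context: For $x\in\mathbb{R}^z$ and $y\in\mathbb{R}^\ell$, the discrete Fréchet distance is $\mathbf{d}_{dF}(x,y)=\min_T\max_{(i,j)\in T}|x_i-y_j|$, where $T$ ranges over traversals: sequences of index pairs from $(1,1)$ to $(z,\ell)$ in which each step increases each index by $0$ or $1$ and at least one index by $1$. *)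

theory Defs
  imports Complex_Main
begin

text \<open>Time series are lists of reals; indices are 0-based.\<close>

definition traversal :: "nat \<Rightarrow> nat \<Rightarrow> (nat \<times> nat) list \<Rightarrow> bool" where
  "traversal z l T \<longleftrightarrow> T \<noteq> [] \<and> hd T = (0, 0) \<and> last T = (z - 1, l - 1) \<and>
     (\<forall>k. Suc k < length T \<longrightarrow>
        (fst (T ! Suc k) = fst (T ! k) \<or> fst (T ! Suc k) = Suc (fst (T ! k))) \<and>
        (snd (T ! Suc k) = snd (T ! k) \<or> snd (T ! Suc k) = Suc (snd (T ! k))) \<and>
        T ! Suc k \<noteq> T ! k)"

definition trav_cost :: "real list \<Rightarrow> real list \<Rightarrow> (nat \<times> nat) list \<Rightarrow> real" where
  "trav_cost x y T = Max ((\<lambda>(i, j). \<bar>x ! i - y ! j\<bar>) ` set T)"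

definition dF :: "real list \<Rightarrow> real list \<Rightarrow> real" where
  "dF x y = Min (trav_cost x y ` {T. traversal (length x) (length y) T})"

end

theory Submission
  imports Defs
begin

text \<open>Whether \<open>dF x y \<le> r\<close> holds is a reachability question in the free space
  \<open>{(i, j). \<bar>x\<^sub>i - y\<^sub>j\<bar> \<le> r}\<close>, which can be scanned row by row along \<open>x\<close>. Replace the
  values of \<open>x\<close> by labels from a finite ordered set \<open>C\<close> and every \<open>y\<^sub>j\<close> by the interval of labels
  of the values near it. Reachability in the last row is then governed by a finite profile of the
  label word, and appending a letter changes the profile only as a function of the old profile.
  By pigeonhole on prefixes, every word can be shortened to length at most
  \<open>2 ^ (l * (\<bar>C\<bar>\<^sup>2 + 1) ^ l)\<close> without changing its profile, which preserves \<open>dF\<close> to all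
  \<open>y\<close> of length \<open>l\<close> up to the discretisation error.

  If \<open>x\<close> takes at most \<open>l\<close> values, these values serve as labels and the error is zero.
  Otherwise \<open>dF x\<close> is bounded below on series of length \<open>l\<close> by some \<open>D > 0\<close> with a witness
  \<open>y\<close> attaining less than \<open>2 D\<close>; all values of \<open>x\<close> lie within \<open>2 D\<close> of that witness, so
  rounding to a grid of width \<open>\<epsilon> D / 2\<close> uses \<open>O(l / \<epsilon>)\<close> labels and errs by at most
  \<open>\<epsilon> dF x y\<close>.\<close>

inductive reachable :: "(nat \<Rightarrow> nat \<Rightarrow> bool) \<Rightarrow> nat \<Rightarrow> nat \<Rightarrow> bool" for P where
  start: "P 0 0 \<Longrightarrow> reachable P 0 0"
| step_fst: "reachable P i j \<Longrightarrow> P (Suc i) j \<Longrightarrow> reachable P (Suc i) j"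
| step_snd: "reachable P i j \<Longrightarrow> P i (Suc j) \<Longrightarrow> reachable P i (Suc j)"
| step_diag: "reachable P i j \<Longrightarrow> P (Suc i) (Suc j) \<Longrightarrow> reachable P (Suc i) (Suc j)"

lemma reachable_imp: "reachable P i j \<Longrightarrow> P i j"
  by (induction rule: reachable.induct) auto

lemma reachable_mono:
  assumes "reachable P i j" "\<And>a b. a \<le> i \<Longrightarrow> b \<le> j \<Longrightarrow> P a b \<Longrightarrow> P' a b"
  shows "reachable P' i j"
  using assms by (induction rule: reachable.induct) (auto intro: reachable.intros)

lemma reachable_cong:
  assumes "\<And>a b. a \<le> i \<Longrightarrow> b \<le> j \<Longrightarrow> P a b \<longleftrightarrow> P' a b"
  shows "reachable P i j \<longleftrightarrow> reachable P' i j"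
  using reachable_mono assms by metis

lemma reachable_True: "reachable (\<lambda>_ _. True) i j"
proof (induction i)
  case 0
  show ?case by (induction j) (auto intro: reachable.intros)
next
  case (Suc i)
  then show ?case by (induction j) (auto intro: reachable.intros)
qed

lemma reachable_covers_rows:
  "reachable P i j \<Longrightarrow> i' \<le> i \<Longrightarrow> \<exists>j'\<le>j. P i' j'"
proof (induction arbitrary: i' rule: reachable.induct)
  case (step_fst i j)
  then show ?case by (cases "i' = Suc i") auto
next
  case (step_snd i j)
  then show ?case by (meson le_Suc_eq)
next
  case (step_diag i j)
  then show ?case by (cases "i' = Suc i") (auto, meson le_Suc_eq le_SucI)
qed auto

lemma reachable_Suc_0_iff: "reachable P (Suc i) 0 \<longleftrightarrow> P (Suc i) 0 \<and> reachable P i 0"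
  by (auto elim: reachable.cases intro: reachable.intros)

lemma reachable_Suc_Suc_iff:
  "reachable P (Suc i) (Suc j) \<longleftrightarrow>
     P (Suc i) (Suc j) \<and> (reachable P i (Suc j) \<or> reachable P (Suc i) j \<or> reachable P i j)"
  by (auto elim: reachable.cases intro: reachable.intros)

lemma reachable_Suc_row_cong:
  assumes "\<And>b. b \<le> j \<Longrightarrow> reachable P i b \<longleftrightarrow> reachable P' i' b"
    and "\<And>b. b \<le> j \<Longrightarrow> P (Suc i) b \<longleftrightarrow> P' (Suc i') b"
  shows "reachable P (Suc i) j \<longleftrightarrow> reachable P' (Suc i') j"
  using assms
proof (induction j)
  case 0
  then show ?case by (simp add: reachable_Suc_0_iff)
next
  case (Suc j)
  then show ?case by (simp add: reachable_Suc_Suc_iff)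
qed

definition grid_step :: "nat \<times> nat \<Rightarrow> nat \<times> nat \<Rightarrow> bool" where
  "grid_step p q \<longleftrightarrow> (fst q = fst p \<or> fst q = Suc (fst p)) \<and>
     (snd q = snd p \<or> snd q = Suc (snd p)) \<and> q \<noteq> p"

lemma traversal_iff:
  "traversal z l T \<longleftrightarrow>
     T \<noteq> [] \<and> hd T = (0, 0) \<and> last T = (z - 1, l - 1) \<and> successively grid_step T"
  unfolding traversal_def successively_conv_nth grid_step_def by blast

lemma reachable_if_path:
  assumes "successively grid_step T" "T \<noteq> []" "hd T = (0, 0)" "\<forall>(i, j) \<in> set T. P i j"
  shows "reachable P (fst (last T)) (snd (last T))"
  using assms
proof (induction T rule: rev_induct)
  case (snoc q T)
  show ?case
  proof (cases "T = []")
    case True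
    then show ?thesis using snoc.prems by (auto intro: reachable.start)
  next
    case False
    then have "reachable P (fst (last T)) (snd (last T))" and "grid_step (last T) q"
      using snoc by (auto simp: successively_append_iff)
    then show ?thesis
      using snoc.prems(4) unfolding grid_step_def
      by (cases q; cases "last T") (auto intro: reachable.intros)
  qed
qed simp

lemma path_if_reachable:
  "reachable P i j \<Longrightarrow> \<exists>T. T \<noteq> [] \<and> hd T = (0, 0) \<and> last T = (i, j) \<and>
     successively grid_step T \<and> (\<forall>(a, b) \<in> set T. P a b)"
proof (induction rule: reachable.induct)
  case start
  then show ?case by (intro exI[of _ "[(0, 0)]"]) auto
next
  case (step_fst i j)
  then obtain T where "T \<noteq> [] \<and> hd T = (0, 0) \<and> last T = (i, j) \<and>
      successively grid_step T \<and> (\<forall>(a, b) \<in> set T. P a b)" by blast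
  with step_fst show ?case
    by (intro exI[of _ "T @ [(Suc i, j)]"]) (auto simp: successively_append_iff grid_step_def)
next
  case (step_snd i j)
  then obtain T where "T \<noteq> [] \<and> hd T = (0, 0) \<and> last T = (i, j) \<and>
      successively grid_step T \<and> (\<forall>(a, b) \<in> set T. P a b)" by blast
  with step_snd show ?case
    by (intro exI[of _ "T @ [(i, Suc j)]"]) (auto simp: successively_append_iff grid_step_def)
next
  case (step_diag i j)
  then obtain T where "T \<noteq> [] \<and> hd T = (0, 0) \<and> last T = (i, j) \<and>
      successively grid_step T \<and> (\<forall>(a, b) \<in> set T. P a b)" by blast
  with step_diag show ?case
    by (intro exI[of _ "T @ [(Suc i, Suc j)]"]) (auto simp: successively_append_iff grid_step_def)
qed

lemma traversal_distinct_bounded: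
  assumes "traversal z l T"
  shows "distinct T \<and> set T \<subseteq> {..z - 1} \<times> {..l - 1}"
proof -
  define below where "below p q \<longleftrightarrow> fst p \<le> fst q \<and> snd p \<le> snd q \<and> p \<noteq> q" for p q :: "nat \<times> nat"
  have "transp below"
    unfolding below_def transp_def by (auto simp: prod_eq_iff)
  moreover have "successively below T"
    using assms by (auto simp: traversal_iff below_def grid_step_def intro: successively_mono)
  ultimately have sorted: "sorted_wrt below T"
    by (simp add: successively_conv_sorted_wrt)
  then have "distinct T"
    by (induction T) (auto simp: below_def)
  moreover have "set T \<subseteq> {..z - 1} \<times> {..l - 1}"
  proof
    fix p assume p: "p \<in> set T"
    have "T \<noteq> []" and last: "last T = (z - 1, l - 1)"
      using assms by (auto simp: traversal_iff)
    have "sorted_wrt below (butlast T @ [last T])"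
      using sorted \<open>T \<noteq> []\<close> by simp
    then have "\<forall>q \<in> set (butlast T). below q (last T)"
      by (simp add: sorted_wrt_append)
    moreover have "set T = insert (last T) (set (butlast T))"
      using \<open>T \<noteq> []\<close> by (metis append_butlast_last_id list.set(2) set_append Un_insert_right append_Nil2)
    ultimately have "p = last T \<or> below p (last T)"
      using p by blast
    then show "p \<in> {..z - 1} \<times> {..l - 1}"
      using last by (auto simp: below_def mem_Times_iff)
  qed
  ultimately show ?thesis ..
qed

lemma finite_traversals: "finite {T. traversal z l T}"
  by (rule finite_subset[OF _ finite_subset_distinct[of "{..z - 1} \<times> {..l - 1}"]])
     (use traversal_distinct_bounded in auto)

lemma traversal_exists: "\<exists>T. traversal z l T"
  using path_if_reachable[OF reachable_True[of "z - 1" "l - 1"]] by (auto simp: traversal_iff)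

lemma dF_le_iff:
  assumes "x \<noteq> []" "y \<noteq> []"
  shows "dF x y \<le> r \<longleftrightarrow> reachable (\<lambda>i j. \<bar>x ! i - y ! j\<bar> \<le> r) (length x - 1) (length y - 1)"
    (is "_ \<longleftrightarrow> reachable ?free _ _")
proof -
  let ?Ts = "{T. traversal (length x) (length y) T}"
  have cost_le: "trav_cost x y T \<le> r \<longleftrightarrow> (\<forall>(i, j) \<in> set T. ?free i j)" if "T \<noteq> []" for T
    using that unfolding trav_cost_def by (subst Max_le_iff) auto
  show ?thesis
  proof
    assume "dF x y \<le> r"
    moreover have "dF x y \<in> trav_cost x y ` ?Ts"
      unfolding dF_def using finite_traversals traversal_exists by (intro Min_in) auto
    ultimately obtain T where T: "traversal (length x) (length y) T" "trav_cost x y T \<le> r"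
      by auto
    then have "T \<noteq> []" "hd T = (0, 0)" "last T = (length x - 1, length y - 1)"
      "successively grid_step T" "\<forall>(i, j) \<in> set T. ?free i j"
      using cost_le by (simp_all add: traversal_iff)
    then show "reachable ?free (length x - 1) (length y - 1)"
      using reachable_if_path[of T ?free] by simp
  next
    assume "reachable ?free (length x - 1) (length y - 1)"
    from path_if_reachable[OF this] obtain T where
      "T \<noteq> []" "hd T = (0, 0)" "last T = (length x - 1, length y - 1)" "successively grid_step T"
      and free: "\<forall>(i, j) \<in> set T. ?free i j"
      by blast
    then have T: "traversal (length x) (length y) T" "\<forall>(i, j) \<in> set T. ?free i j"
      by (simp_all add: traversal_iff)
    have "dF x y \<le> trav_cost x y T"
      unfolding dF_def using finite_traversals T(1) by (intro Min_le) auto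
    moreover have "trav_cost x y T \<le> r"
      using cost_le T by (simp add: traversal_iff)
    ultimately show "dF x y \<le> r" by linarith
  qed
qed

lemma dF_nonneg: "x \<noteq> [] \<Longrightarrow> y \<noteq> [] \<Longrightarrow> 0 \<le> dF x y"
  using reachable_imp dF_le_iff[of x y "dF x y"] by force

lemma dF_covers_values:
  assumes "x \<noteq> []" "y \<noteq> []" "v \<in> set x"
  shows "\<exists>j < length y. \<bar>v - y ! j\<bar> \<le> dF x y"
proof -
  obtain i where i: "i < length x" "v = x ! i"
    using assms(3) by (auto simp: in_set_conv_nth)
  have "reachable (\<lambda>i j. \<bar>x ! i - y ! j\<bar> \<le> dF x y) (length x - 1) (length y - 1)"
    using dF_le_iff[OF assms(1,2), of "dF x y"] by simp
  moreover have "i \<le> length x - 1"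
    using i by simp
  ultimately obtain j where "j \<le> length y - 1" "\<bar>x ! i - y ! j\<bar> \<le> dF x y"
    by (blast dest: reachable_covers_rows)
  then show ?thesis
    using i assms(2) by (cases y) (auto intro: exI[of _ j])
qed

definition profile :: "'a set set \<Rightarrow> nat \<Rightarrow> 'a list \<Rightarrow> (nat \<times> 'a set list) set" where
  "profile F l u = {(j, Q). j < l \<and> set Q \<subseteq> F \<and> length Q = l \<and>
     reachable (\<lambda>a b. u ! a \<in> Q ! b) (length u - 1) j}"

lemma profile_subset: "profile F l u \<subseteq> {..<l} \<times> {Q. set Q \<subseteq> F \<and> length Q = l}"
  unfolding profile_def by auto

lemma reachable_append_iff:
  assumes "u \<noteq> []"
  shows "reachable (\<lambda>a b. (u @ w) ! a \<in> Q ! b) (length u - 1) j \<longleftrightarrow>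
    reachable (\<lambda>a b. u ! a \<in> Q ! b) (length u - 1) j"
proof (rule reachable_cong)
  fix a b assume "a \<le> length u - 1"
  then have "a < length u"
    using assms by (cases u) auto
  then show "(u @ w) ! a \<in> Q ! b \<longleftrightarrow> u ! a \<in> Q ! b"
    by (simp add: nth_append)
qed

lemma profile_snoc:
  assumes "u \<noteq> []" "u' \<noteq> []" "profile F l u = profile F l u'"
  shows "profile F l (u @ [c]) = profile F l (u' @ [c])"
proof -
  have "reachable (\<lambda>a b. (u @ [c]) ! a \<in> Q ! b) (Suc (length u - 1)) j \<longleftrightarrow>
      reachable (\<lambda>a b. (u' @ [c]) ! a \<in> Q ! b) (Suc (length u' - 1)) j"
    if "j < l" "set Q \<subseteq> F" "length Q = l" for j Q
  proof (rule reachable_Suc_row_cong)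
    fix b assume "b \<le> j"
    then have "(b, Q) \<in> profile F l u \<longleftrightarrow> (b, Q) \<in> profile F l u'"
      using assms(3) by simp
    then show "reachable (\<lambda>a b. (u @ [c]) ! a \<in> Q ! b) (length u - 1) b \<longleftrightarrow>
        reachable (\<lambda>a b. (u' @ [c]) ! a \<in> Q ! b) (length u' - 1) b"
      using that \<open>b \<le> j\<close> reachable_append_iff[OF assms(1), of "[c]" Q b]
        reachable_append_iff[OF assms(2), of "[c]" Q b]
      by (simp add: profile_def)
  next
    fix b
    show "(u @ [c]) ! Suc (length u - 1) \<in> Q ! b \<longleftrightarrow> (u' @ [c]) ! Suc (length u' - 1) \<in> Q ! b"
      using assms(1,2) by simp
  qed
  then show ?thesis
    using assms(1,2) by (auto simp: profile_def)
qed

lemma profile_append: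
  assumes "u \<noteq> []" "u' \<noteq> []" "profile F l u = profile F l u'"
  shows "profile F l (u @ w) = profile F l (u' @ w)"
proof (induction w rule: rev_induct)
  case (snoc c w)
  then show ?case
    using profile_snoc[of "u @ w" "u' @ w" F l c] assms(1,2) by simp
qed (use assms in simp)

lemma prefixes_with_same_profile:
  assumes "finite F" "length u > 2 ^ (l * card F ^ l)"
  obtains a b where "0 < a" "a < b" "b \<le> length u" "profile F l (take a u) = profile F l (take b u)"
proof -
  let ?states = "Pow ({..<l} \<times> {Q. set Q \<subseteq> F \<and> length Q = l})"
  have fin: "finite ?states"
    using assms(1) by (simp add: finite_lists_length_eq)
  then have "card ?states = 2 ^ (l * card F ^ l)"
    using assms(1) by (simp add: card_Pow card_cartesian_product card_lists_length_eq)
  then have "card ?states < card {1..length u}"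
    using assms(2) by simp
  moreover have "(\<lambda>k. profile F l (take k u)) ` {1..length u} \<subseteq> ?states"
    using profile_subset by blast
  ultimately have "\<not> inj_on (\<lambda>k. profile F l (take k u)) {1..length u}"
    using card_inj_on_le[OF _ _ fin] by fastforce
  then obtain a b where "a \<in> {1..length u}" "b \<in> {1..length u}" "a < b"
    "profile F l (take a u) = profile F l (take b u)"
    unfolding inj_on_def by (metis linorder_neqE_nat)
  then show ?thesis
    using that[of a b] by simp
qed

lemma short_word_with_same_profile:
  assumes "finite F" "u \<noteq> []"
  shows "\<exists>u'. u' \<noteq> [] \<and> set u' \<subseteq> set u \<and> length u' \<le> 2 ^ (l * card F ^ l) \<and>
    profile F l u' = profile F l u"
  using assms(2)
proof (induction "length u" arbitrary: u rule: less_induct)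
  case less
  show ?case
  proof (cases "length u \<le> 2 ^ (l * card F ^ l)")
    case True
    then show ?thesis
      using less.prems by blast
  next
    case False
    then obtain a b where ab: "0 < a" "a < b" "b \<le> length u"
      "profile F l (take a u) = profile F l (take b u)"
      using prefixes_with_same_profile[OF assms(1), of l u] by auto
    define v where "v = take a u @ drop b u"
    have "profile F l v = profile F l (take b u @ drop b u)"
      unfolding v_def using ab by (intro profile_append) auto
    then have "profile F l v = profile F l u"
      by simp
    moreover have "length v < length u" "v \<noteq> []"
      unfolding v_def using ab less.prems by auto
    moreover have "set v \<subseteq> set u"
      unfolding v_def using set_take_subset set_drop_subset by fastforce
    ultimately show ?thesis
      using less.hyps[of v] by blast
  qed
qed

definition intervals :: "'a::linorder set \<Rightarrow> 'a set set" where
  "intervals C = insert {} ((\<lambda>(a, b). {c \<in> C. a \<le> c \<and> c \<le> b}) ` (C \<times> C))"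

lemma finite_intervals: "finite C \<Longrightarrow> finite (intervals C)"
  unfolding intervals_def by simp

lemma card_intervals_le: "finite C \<Longrightarrow> card (intervals C) \<le> card C ^ 2 + 1"
proof -
  assume "finite C"
  then have "card ((\<lambda>(a, b). {c \<in> C. a \<le> c \<and> c \<le> b}) ` (C \<times> C)) \<le> card C ^ 2"
    using card_image_le[of "C \<times> C"] by (simp add: card_cartesian_product power2_eq_square)
  then show ?thesis
    unfolding intervals_def using \<open>finite C\<close> by (simp add: card_insert_if)
qed

lemma interval_in_intervals:
  assumes "finite C"
  shows "{c \<in> C. lo \<le> c \<and> c \<le> hi} \<in> intervals C"
proof (cases "{c \<in> C. lo \<le> c \<and> c \<le> hi} = {}")
  case False
  define S where "S = {c \<in> C. lo \<le> c \<and> c \<le> hi}"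
  have "finite S" "S \<noteq> {}"
    using assms False unfolding S_def by auto
  then have "Min S \<in> S" "Max S \<in> S"
    by simp_all
  moreover have "S = {c \<in> C. Min S \<le> c \<and> c \<le> Max S}"
    using \<open>finite S\<close> \<open>Min S \<in> S\<close> \<open>Max S \<in> S\<close> unfolding S_def
    by (auto intro: order_trans)
  ultimately show ?thesis
    unfolding intervals_def S_def[symmetric] by (auto simp: S_def)
qed (simp add: intervals_def)

text \<open>A discretisation \<open>\<kappa>\<close> of the values comes with windows \<open>[lo r v, hi r v]\<close> of the
  discrete range that contain the image of the \<open>r\<close>-ball around \<open>v\<close> and whose preimage lies in
  the \<open>(r + g)\<close>-ball. Testing the free space at level \<open>r\<close> against \<open>y\<close> is then, up to \<open>g\<close>,
  a question about the profile of the discretised series with respect to intervals.\<close>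

lemma dF_le_add_if_same_profile:
  fixes \<kappa> :: "real \<Rightarrow> 'a::linorder"
  assumes "finite C" "\<kappa> ` set a \<subseteq> C" "a \<noteq> []" "b \<noteq> []" "y \<noteq> []"
    and same: "profile (intervals C) (length y) (map \<kappa> a) = profile (intervals C) (length y) (map \<kappa> b)"
    and inner: "\<And>r v w. 0 \<le> r \<Longrightarrow> \<bar>w - v\<bar> \<le> r \<Longrightarrow> lo r v \<le> \<kappa> w \<and> \<kappa> w \<le> hi r v"
    and outer: "\<And>r v w. 0 \<le> r \<Longrightarrow> lo r v \<le> \<kappa> w \<Longrightarrow> \<kappa> w \<le> hi r v \<Longrightarrow> \<bar>w - v\<bar> \<le> r + g"
  shows "dF b y \<le> dF a y + g"
proof -
  define r where "r = dF a y"
  have "0 \<le> r"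
    unfolding r_def using dF_nonneg assms(3,5) by blast
  define Q where "Q = map (\<lambda>v. {c \<in> C. lo r v \<le> c \<and> c \<le> hi r v}) y"
  have Q: "set Q \<subseteq> intervals C" "length Q = length y"
    unfolding Q_def using interval_in_intervals[OF assms(1)] by auto
  have "reachable (\<lambda>i j. \<bar>a ! i - y ! j\<bar> \<le> r) (length a - 1) (length y - 1)"
    using dF_le_iff[OF assms(3,5), of r] r_def by simp
  then have "reachable (\<lambda>i j. map \<kappa> a ! i \<in> Q ! j) (length a - 1) (length y - 1)"
  proof (rule reachable_mono)
    fix i j assume ij: "i \<le> length a - 1" "j \<le> length y - 1" "\<bar>a ! i - y ! j\<bar> \<le> r"
    then have "i < length a" "j < length y"
      using assms(3,5) by (cases a; cases y; auto)+
    then show "map \<kappa> a ! i \<in> Q ! j"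
      using assms(2) inner[OF \<open>0 \<le> r\<close> ij(3)] by (auto simp: Q_def)
  qed
  then have "(length y - 1, Q) \<in> profile (intervals C) (length y) (map \<kappa> a)"
    unfolding profile_def using Q assms(5) by simp
  then have "reachable (\<lambda>i j. map \<kappa> b ! i \<in> Q ! j) (length b - 1) (length y - 1)"
    unfolding same by (simp add: profile_def)
  then have "reachable (\<lambda>i j. \<bar>b ! i - y ! j\<bar> \<le> r + g) (length b - 1) (length y - 1)"
  proof (rule reachable_mono)
    fix i j assume ij: "i \<le> length b - 1" "j \<le> length y - 1" "map \<kappa> b ! i \<in> Q ! j"
    then have "i < length b" "j < length y"
      using assms(4,5) by (cases b; cases y; auto)+
    then show "\<bar>b ! i - y ! j\<bar> \<le> r + g"
      using ij(3) outer[OF \<open>0 \<le> r\<close>] by (auto simp: Q_def)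
  qed
  then show ?thesis
    using dF_le_iff[OF assms(4,5)] r_def by simp
qed

lemma dF_compression_by_discretisation:
  fixes \<kappa> :: "real \<Rightarrow> 'a::linorder" and \<sigma> :: "'a \<Rightarrow> real"
  assumes "finite C" "\<kappa> ` set x \<subseteq> C" "x \<noteq> []" "l \<ge> 1"
    and retract: "\<And>k. k \<in> C \<Longrightarrow> \<kappa> (\<sigma> k) = k"
    and inner: "\<And>r v w. 0 \<le> r \<Longrightarrow> \<bar>w - v\<bar> \<le> r \<Longrightarrow> lo r v \<le> \<kappa> w \<and> \<kappa> w \<le> hi r v"
    and outer: "\<And>r v w. 0 \<le> r \<Longrightarrow> lo r v \<le> \<kappa> w \<Longrightarrow> \<kappa> w \<le> hi r v \<Longrightarrow> \<bar>w - v\<bar> \<le> r + g"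
  shows "\<exists>x'. x' \<noteq> [] \<and> length x' \<le> 2 ^ (l * (card C ^ 2 + 1) ^ l) \<and>
    (\<forall>y. length y = l \<longrightarrow> \<bar>dF x' y - dF x y\<bar> \<le> g)"
proof -
  obtain u where u: "u \<noteq> []" "set u \<subseteq> set (map \<kappa> x)" "length u \<le> 2 ^ (l * card (intervals C) ^ l)"
    "profile (intervals C) l u = profile (intervals C) l (map \<kappa> x)"
    using short_word_with_same_profile[OF finite_intervals[OF assms(1)], of "map \<kappa> x" l] assms(3)
    by auto
  define x' where "x' = map \<sigma> u"
  have "set u \<subseteq> C"
    using u(2) assms(2) by auto
  then have "map \<kappa> x' = u"
    unfolding x'_def map_map using retract by (intro map_idI) auto
  then have "\<kappa> ` set x' \<subseteq> C" and same: "profile (intervals C) l (map \<kappa> x') = profile (intervals C) l (map \<kappa> x)"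
    using \<open>set u \<subseteq> C\<close> u(4) by (metis set_map, simp)
  have "length x' \<le> 2 ^ (l * (card C ^ 2 + 1) ^ l)"
  proof -
    have "l * card (intervals C) ^ l \<le> l * (card C ^ 2 + 1) ^ l"
      using card_intervals_le[OF assms(1)] by (simp add: power_mono)
    then show ?thesis
      using u(3) unfolding x'_def by (simp add: order_trans)
  qed
  moreover have "\<bar>dF x' y - dF x y\<bar> \<le> g" if "length y = l" for y
  proof -
    have "y \<noteq> []" "x' \<noteq> []"
      using that assms(4) u(1) unfolding x'_def by auto
    then have "dF x' y \<le> dF x y + g" "dF x y \<le> dF x' y + g"
      using dF_le_add_if_same_profile[OF assms(1,2,3), of x' y lo hi g]
        dF_le_add_if_same_profile[OF assms(1) \<open>\<kappa> ` set x' \<subseteq> C\<close>, of x y lo hi g]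
        assms(3) same that inner outer by auto
    then show ?thesis
      by linarith
  qed
  moreover have "x' \<noteq> []"
    using u(1) unfolding x'_def by simp
  ultimately show ?thesis
    by blast
qed

lemma dF_compression_exact:
  assumes "x \<noteq> []" "l \<ge> 1"
  shows "\<exists>x'. x' \<noteq> [] \<and> length x' \<le> 2 ^ (l * (card (set x) ^ 2 + 1) ^ l) \<and>
    (\<forall>y. length y = l \<longrightarrow> dF x' y = dF x y)"
proof -
  have "\<exists>x'. x' \<noteq> [] \<and> length x' \<le> 2 ^ (l * (card (set x) ^ 2 + 1) ^ l) \<and>
      (\<forall>y. length y = l \<longrightarrow> \<bar>dF x' y - dF x y\<bar> \<le> 0)"
    by (rule dF_compression_by_discretisation[where \<kappa> = "\<lambda>v. v" and \<sigma> = "\<lambda>v. v"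
          and lo = "\<lambda>r v. v - r" and hi = "\<lambda>r v. v + r"])
      (use assms in \<open>auto simp: abs_le_iff\<close>)
  then show ?thesis
    by simp
qed

lemma dF_compression_grid:
  assumes "0 < g" "x \<noteq> []" "l \<ge> 1"
  shows "\<exists>x'. x' \<noteq> [] \<and> length x' \<le> 2 ^ (l * (card ((\<lambda>v. \<lfloor>v / g\<rfloor>) ` set x) ^ 2 + 1) ^ l) \<and>
    (\<forall>y. length y = l \<longrightarrow> \<bar>dF x' y - dF x y\<bar> \<le> g)"
proof (rule dF_compression_by_discretisation[where \<sigma> = "\<lambda>k. of_int k * g"
      and lo = "\<lambda>r v. \<lfloor>(v - r) / g\<rfloor>" and hi = "\<lambda>r v. \<lfloor>(v + r) / g\<rfloor>"])
  fix r v w :: real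
  assume "\<bar>w - v\<bar> \<le> r"
  then have "(v - r) / g \<le> w / g" "w / g \<le> (v + r) / g"
    using assms(1) by (auto intro!: divide_right_mono)
  then show "\<lfloor>(v - r) / g\<rfloor> \<le> \<lfloor>w / g\<rfloor> \<and> \<lfloor>w / g\<rfloor> \<le> \<lfloor>(v + r) / g\<rfloor>"
    by (auto intro: floor_mono)
next
  fix r v w :: real
  assume "\<lfloor>(v - r) / g\<rfloor> \<le> \<lfloor>w / g\<rfloor>" "\<lfloor>w / g\<rfloor> \<le> \<lfloor>(v + r) / g\<rfloor>"
  then have "(v - r) / g < (w + g) / g" "w / g < (v + r + g) / g"
    using assms(1) by (simp_all add: add_divide_distrib, linarith+)
  then show "\<bar>w - v\<bar> \<le> r + g"
    using assms(1) by (simp add: divide_less_cancel abs_le_iff)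
qed (use assms in auto)

lemma finite_set_separated:
  fixes S :: "real set"
  assumes "finite S"
  shows "\<exists>\<delta>>0. \<forall>v\<in>S. \<forall>w\<in>S. v \<noteq> w \<longrightarrow> \<delta> \<le> \<bar>v - w\<bar>"
proof -
  define gaps where "gaps = insert 1 ((\<lambda>(v, w). \<bar>v - w\<bar>) ` {(v, w) \<in> S \<times> S. v \<noteq> w})"
  have "finite gaps"
    unfolding gaps_def using assms by (auto intro: finite_subset[of _ "S \<times> S"])
  moreover have "gaps \<noteq> {}"
    unfolding gaps_def by simp
  ultimately have "Min gaps \<in> gaps" "\<forall>d\<in>gaps. Min gaps \<le> d"
    by simp_all
  moreover have "\<forall>d\<in>gaps. 0 < d"
    unfolding gaps_def by auto
  moreover have "\<forall>v\<in>S. \<forall>w\<in>S. v \<noteq> w \<longrightarrow> \<bar>v - w\<bar> \<in> gaps"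
    unfolding gaps_def by auto
  ultimately show ?thesis
    by (intro exI[of _ "Min gaps"]) auto
qed

lemma dF_ge_separation:
  assumes "x \<noteq> []" "y \<noteq> []" "length y < card (set x)"
    and separated: "\<forall>v\<in>set x. \<forall>w\<in>set x. v \<noteq> w \<longrightarrow> \<delta> \<le> \<bar>v - w\<bar>"
  shows "\<delta> \<le> 2 * dF x y"
proof (rule ccontr)
  assume "\<not> \<delta> \<le> 2 * dF x y"
  obtain h where h: "\<forall>v\<in>set x. h v < length y \<and> \<bar>v - y ! h v\<bar> \<le> dF x y"
    using dF_covers_values[OF assms(1,2)] by metis
  have "inj_on h (set x)"
  proof (rule inj_onI, rule ccontr)
    fix v w assume "v \<in> set x" "w \<in> set x" "h v = h w" "v \<noteq> w"
    then have "\<bar>v - y ! h v\<bar> \<le> dF x y" "\<bar>w - y ! h v\<bar> \<le> dF x y"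
      using h by auto
    then have "\<bar>v - w\<bar> \<le> 2 * dF x y"
      by (auto simp: abs_le_iff)
    then show False
      using separated \<open>v \<in> set x\<close> \<open>w \<in> set x\<close> \<open>v \<noteq> w\<close> \<open>\<not> \<delta> \<le> 2 * dF x y\<close> by fastforce
  qed
  then have "card (set x) \<le> card {..<length y}"
    using h by (intro card_inj_on_le) auto
  then show False
    using assms(3) by simp
qed

lemma exists_lower_bound_within_factor_two:
  fixes f :: "'a \<Rightarrow> real"
  assumes "Y \<noteq> {}" "0 < \<delta>" "\<forall>y\<in>Y. \<delta> \<le> f y"
  shows "\<exists>D>0. (\<forall>y\<in>Y. D \<le> f y) \<and> (\<exists>y\<in>Y. f y < 2 * D)"
proof -
  define D where "D = Inf (f ` Y)"
  have "bdd_below (f ` Y)"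
    using assms(3) by (auto intro: bdd_belowI2)
  then have "\<forall>y\<in>Y. D \<le> f y"
    unfolding D_def by (auto intro: cInf_lower)
  moreover have "\<delta> \<le> D"
    unfolding D_def using assms by (auto intro: cInf_greatest)
  moreover from this have "D < 2 * D"
    using assms(2) by simp
  then have "\<exists>y\<in>Y. f y < 2 * D"
    using cInf_lessD[of "f ` Y" "2 * D"] assms(1) unfolding D_def by auto
  ultimately show ?thesis
    using assms(2) by (intro exI[of _ D]) auto
qed

lemma card_floor_image_le:
  fixes S :: "real set"
  assumes "0 < g" "0 \<le> R" "\<forall>v\<in>S. \<exists>j<l. \<bar>v - c j\<bar> \<le> R"
  shows "real (card ((\<lambda>v. \<lfloor>v / g\<rfloor>) ` S)) \<le> real l * (2 * R / g + 2)"
proof -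
  define cells where "cells j = {\<lfloor>(c j - R) / g\<rfloor>..\<lfloor>(c j + R) / g\<rfloor>}" for j
  have "(\<lambda>v. \<lfloor>v / g\<rfloor>) ` S \<subseteq> (\<Union>j<l. cells j)"
  proof
    fix k assume "k \<in> (\<lambda>v. \<lfloor>v / g\<rfloor>) ` S"
    then obtain v j where "v \<in> S" "k = \<lfloor>v / g\<rfloor>" "j < l" "\<bar>v - c j\<bar> \<le> R"
      using assms(3) by blast
    moreover from this have "(c j - R) / g \<le> v / g" "v / g \<le> (c j + R) / g"
      using assms(1) by (auto intro!: divide_right_mono)
    ultimately show "k \<in> (\<Union>j<l. cells j)"
      unfolding cells_def by (auto intro: floor_mono)
  qed
  then have "card ((\<lambda>v. \<lfloor>v / g\<rfloor>) ` S) \<le> card (\<Union>j<l. cells j)"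
    by (intro card_mono) (auto simp: cells_def)
  also have "\<dots> \<le> (\<Sum>j<l. card (cells j))"
    by (rule card_UN_le) simp
  finally have "real (card ((\<lambda>v. \<lfloor>v / g\<rfloor>) ` S)) \<le> (\<Sum>j<l. real (card (cells j)))"
    by (metis of_nat_le_iff of_nat_sum)
  also have "\<dots> \<le> (\<Sum>j<l. 2 * R / g + 2)"
  proof (rule sum_mono)
    fix j
    have "(c j + R) / g - (c j - R) / g = 2 * R / g"
      using assms(1) by (simp add: field_simps)
    then have "real_of_int (\<lfloor>(c j + R) / g\<rfloor> - \<lfloor>(c j - R) / g\<rfloor> + 1) \<le> 2 * R / g + 2"
      by linarith
    moreover have "0 \<le> 2 * R / g"
      using assms(1,2) by simp
    ultimately show "real (card (cells j)) \<le> 2 * R / g + 2"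
      unfolding cells_def card_atLeastAtMost_int by (cases "\<lfloor>(c j - R) / g\<rfloor> \<le> \<lfloor>(c j + R) / g\<rfloor> + 1") auto
  qed
  finally show ?thesis
    by simp
qed

lemma dF_compression_relative:
  assumes "0 < \<epsilon>" "\<epsilon> < 1" "l \<ge> 1" "x \<noteq> []"
  shows "\<exists>x' m. x' \<noteq> [] \<and> real m \<le> 10 * real l / \<epsilon> \<and> length x' \<le> 2 ^ (l * (m ^ 2 + 1) ^ l) \<and>
    (\<forall>y. length y = l \<longrightarrow> \<bar>dF x' y - dF x y\<bar> \<le> \<epsilon> * dF x y)"
proof (cases "card (set x) \<le> l")
  case True
  have "\<epsilon> * real (card (set x)) \<le> 10 * real l"
    using True assms(2) by (intro mult_mono) auto
  then have "real (card (set x)) \<le> 10 * real l / \<epsilon>"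
    using True assms(1) by (simp add: field_simps)
  moreover have "0 \<le> \<epsilon> * dF x y" if "length y = l" for y
    using dF_nonneg[OF assms(4), of y] that assms(1,3) by (cases y) auto
  moreover obtain x' where "x' \<noteq> []" "length x' \<le> 2 ^ (l * (card (set x) ^ 2 + 1) ^ l)"
    and "\<forall>y. length y = l \<longrightarrow> dF x' y = dF x y"
    using dF_compression_exact[OF assms(4,3)] by blast
  ultimately show ?thesis
    by (intro exI[of _ x'] exI[of _ "card (set x)"]) auto
next
  case False
  obtain \<delta> where "0 < \<delta>" and separated: "\<forall>v\<in>set x. \<forall>w\<in>set x. v \<noteq> w \<longrightarrow> \<delta> \<le> \<bar>v - w\<bar>"
    using finite_set_separated[of "set x"] by auto
  let ?Y = "{y :: real list. length y = l}"
  have "\<forall>y\<in>?Y. \<delta> / 2 \<le> dF x y"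
  proof
    fix y assume "y \<in> ?Y"
    then have "y \<noteq> []" "length y < card (set x)"
      using False assms(3) by auto
    then have "\<delta> \<le> 2 * dF x y"
      using dF_ge_separation[OF assms(4) _ _ separated] by blast
    then show "\<delta> / 2 \<le> dF x y"
      by simp
  qed
  moreover have "?Y \<noteq> {}"
    using length_replicate[of l "0 :: real"] by blast
  ultimately obtain D where "0 < D" and D_le: "\<forall>y. length y = l \<longrightarrow> D \<le> dF x y"
    and "\<exists>ys. length ys = l \<and> dF x ys < 2 * D"
    using exists_lower_bound_within_factor_two[of ?Y "\<delta> / 2" "dF x"] \<open>0 < \<delta>\<close>
    by auto
  then obtain ys where ys: "length ys = l" "dF x ys < 2 * D"
    by blast
  define g where "g = \<epsilon> * D / 2"
  have "0 < g"
    unfolding g_def using assms(1) \<open>0 < D\<close> by simp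
  have "\<forall>v\<in>set x. \<exists>j<l. \<bar>v - ys ! j\<bar> \<le> 2 * D"
  proof
    fix v assume "v \<in> set x"
    moreover have "ys \<noteq> []"
      using ys(1) assms(3) by auto
    ultimately obtain j where "j < l" "\<bar>v - ys ! j\<bar> \<le> dF x ys"
      using dF_covers_values[OF assms(4)] ys(1) by blast
    then show "\<exists>j<l. \<bar>v - ys ! j\<bar> \<le> 2 * D"
      using ys(2) by force
  qed
  then have "real (card ((\<lambda>v. \<lfloor>v / g\<rfloor>) ` set x)) \<le> real l * (2 * (2 * D) / g + 2)"
    using card_floor_image_le[OF \<open>0 < g\<close>, of "2 * D" "set x" l "\<lambda>j. ys ! j"] \<open>0 < D\<close> by simp
  also have "\<dots> \<le> 10 * real l / \<epsilon>"
    unfolding g_def using assms(1,2) \<open>0 < D\<close> mult_right_mono[of \<epsilon> 1 "real l"] by (simp add: field_simps)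
  finally have "real (card ((\<lambda>v. \<lfloor>v / g\<rfloor>) ` set x)) \<le> 10 * real l / \<epsilon>" .
  moreover obtain x' where "x' \<noteq> []"
    "length x' \<le> 2 ^ (l * (card ((\<lambda>v. \<lfloor>v / g\<rfloor>) ` set x) ^ 2 + 1) ^ l)"
    and err: "\<forall>y. length y = l \<longrightarrow> \<bar>dF x' y - dF x y\<bar> \<le> g"
    using dF_compression_grid[OF \<open>0 < g\<close> assms(4,3)] by blast
  moreover have "g \<le> \<epsilon> * dF x y" if "length y = l" for y
    using D_le that assms(1) \<open>0 < D\<close> mult_left_mono[of D "dF x y" \<epsilon>] unfolding g_def by force
  ultimately show ?thesis
    by (intro exI[of _ x'] exI[of _ "card ((\<lambda>v. \<lfloor>v / g\<rfloor>) ` set x)"]) (auto intro: order_trans)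
qed

lemma compression_length_bound:
  assumes "real m \<le> 10 * real l / \<epsilon>" "0 < \<epsilon>" "\<epsilon> < 1" "l \<ge> 1"
    and "n \<le> 2 ^ (l * (m ^ 2 + 1) ^ l)"
  shows "real n \<le> 2 powr ((11 * real l / \<epsilon>) ^ (2 * l + 2))"
proof -
  define s where "s = real l / \<epsilon>"
  have "real l \<le> s"
    unfolding s_def using assms(2,3) by (simp add: field_simps mult_left_le_one_le)
  then have "1 \<le> s"
    using assms(4) by simp
  have "real m \<le> 10 * s"
    using assms(1) unfolding s_def by simp
  then have "real m ^ 2 \<le> (10 * s) ^ 2"
    by (intro power_mono) auto
  moreover have "s \<le> s ^ 2"
    using mult_left_mono[OF \<open>1 \<le> s\<close>, of s] \<open>1 \<le> s\<close> by (simp add: power2_eq_square)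
  ultimately have base: "real (m ^ 2 + 1) \<le> (11 * s) ^ 2" and factor: "real l \<le> (11 * s) ^ 2"
    using \<open>1 \<le> s\<close> \<open>real l \<le> s\<close> by (simp_all add: power_mult_distrib)
  have "real (l * (m ^ 2 + 1) ^ l) \<le> (11 * s) ^ 2 * ((11 * s) ^ 2) ^ l"
    unfolding of_nat_mult of_nat_power using base factor by (intro mult_mono power_mono) auto
  also have "\<dots> = (11 * s) ^ (2 * l + 2)"
    by (metis add.commute mult.commute power_add power_mult)
  finally have exponent: "real (l * (m ^ 2 + 1) ^ l) \<le> (11 * real l / \<epsilon>) ^ (2 * l + 2)"
    unfolding s_def by simp
  have "real n \<le> 2 ^ (l * (m ^ 2 + 1) ^ l)"
    using assms(5) by (metis of_nat_le_iff of_nat_numeral of_nat_power)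
  also have "\<dots> = 2 powr real (l * (m ^ 2 + 1) ^ l)"
    by (subst powr_realpow) auto
  also have "\<dots> \<le> 2 powr ((11 * real l / \<epsilon>) ^ (2 * l + 2))"
    using exponent by (intro powr_mono) auto
  finally show ?thesis .
qed

theorem corollary9p12:
  "\<exists>C1 C2 :: real. C1 > 0 \<and> C2 > 0 \<and>
    (\<forall>(\<epsilon>::real) (l::nat) (x::real list).
       0 < \<epsilon> \<and> \<epsilon> < 1 \<and> l \<ge> 1 \<and> length x \<ge> 1 \<longrightarrow>
       (\<exists>x'::real list. length x' \<ge> 1 \<and>
          real (length x') \<le> C1 * 2 powr ((C2 * real l / \<epsilon>) ^ (2 * l + 2)) \<and>
          (\<forall>y::real list. length y = l \<longrightarrow>
             (1 - \<epsilon>) * dF x y \<le> dF x' y \<and> dF x' y \<le> (1 + \<epsilon>) * dF x y)))"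
proof (rule exI[of _ 1], rule exI[of _ 11], intro conjI allI impI)
  fix \<epsilon> :: real and l :: nat and x :: "real list"
  assume "0 < \<epsilon> \<and> \<epsilon> < 1 \<and> l \<ge> 1 \<and> length x \<ge> 1"
  then have \<epsilon>: "0 < \<epsilon>" "\<epsilon> < 1" and "l \<ge> 1" "x \<noteq> []"
    by auto
  then obtain x' m where "x' \<noteq> []" and m: "real m \<le> 10 * real l / \<epsilon>"
    and len: "length x' \<le> 2 ^ (l * (m ^ 2 + 1) ^ l)"
    and close: "\<forall>y. length y = l \<longrightarrow> \<bar>dF x' y - dF x y\<bar> \<le> \<epsilon> * dF x y"
    using dF_compression_relative[OF \<epsilon> \<open>l \<ge> 1\<close> \<open>x \<noteq> []\<close>] by blast
  have "real (length x') \<le> 2 powr ((11 * real l / \<epsilon>) ^ (2 * l + 2))"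
    using compression_length_bound[OF m \<epsilon> \<open>l \<ge> 1\<close> len] .
  moreover have "(1 - \<epsilon>) * dF x y \<le> dF x' y \<and> dF x' y \<le> (1 + \<epsilon>) * dF x y" if "length y = l" for y
    using close that by (auto simp: abs_le_iff algebra_simps)
  ultimately show "\<exists>x'. length x' \<ge> 1 \<and>
      real (length x') \<le> 1 * 2 powr ((11 * real l / \<epsilon>) ^ (2 * l + 2)) \<and>
      (\<forall>y. length y = l \<longrightarrow> (1 - \<epsilon>) * dF x y \<le> dF x' y \<and> dF x' y \<le> (1 + \<epsilon>) * dF x y)"
    using \<open>x' \<noteq> []\<close> by (intro exI[of _ x']) (simp add: Suc_le_eq)
qed simp_all

end
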